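(* Let $\mathsf{T}$ be a triangulation of the standard simplex $\Delta^{n-1}=\langle v_1,\ldots,v_n\rangle$ and let $\lambda_1,\ldots,\lambda_m$ be Sperner labelings of $\mathsf{T}$. (1) For any choice of positive integers $k_1,\ldots,k_m$ with $k_1+\cdots+k_m=m+n-1$, there exists a simplex $\sigma\in\mathsf{T}$ such that, for each $i\in[m]$, the labeling $\lambda_i$ uses at least $k_i$ distinct labels on the vertices of $\sigma$. (2) For any choice of positive integers $\ell_1,\ldots,\ell_n$ with $\ell_1+\cdots+\ell_n=m+n-1$, there exists a simplex $\tau\in\mathsf{T}$ such that, for each $j\in[n]$, the label $j$ is used on the vertices of $\tau$ by at least $\ell_j$ of the labelings $\lambda_1,\ldots,\lambda_m$.
   Context: A labeling $\lambda\colon V(\mathsf{T})\to[n]$ of the vertices of a triangulation $\mathsf{T}$ of $\Delta^{n-1}=\langle v_1,\ldots,v_n\rangle$ is a Sperner labeling if each vertex $v$ of $\mathsf{T}$ receives a label $j$ such that $v_j$ is a vertex of the minimal face of $\Delta^{n-1}$ containing $v$. *)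

theory Defs
  imports "HOL-Analysis.Analysis"
begin

text \<open>The standard simplex with vertices v_j = e_j (j ranging over the finite index type 'n, |'n| = n).\<close>
definition std_vertex :: "'n::finite \<Rightarrow> real^'n" where
  "std_vertex j = axis j 1"

definition std_simplex :: "(real^'n::finite) set" where
  "std_simplex = convex hull (range std_vertex)"

definition triangulation_of_std_simplex :: "(real^'n::finite) set set \<Rightarrow> bool" where
  "triangulation_of_std_simplex T \<longleftrightarrow> simplicial_complex T \<and> \<Union>T = std_simplex"

definition simplex_vertices :: "(real^'n::finite) set \<Rightarrow> (real^'n) set" where
  "simplex_vertices \<sigma> = {x. x extreme_point_of \<sigma>}"

definition tri_vertices :: "(real^'n::finite) set set \<Rightarrow> (real^'n) set" where
  "tri_vertices T = (\<Union>\<sigma>\<in>T. simplex_vertices \<sigma>)"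

definition min_face :: "real^'n::finite \<Rightarrow> (real^'n) set" where
  "min_face v = \<Inter>{F. F face_of std_simplex \<and> v \<in> F}"

definition sperner_labeling :: "(real^'n::finite) set set \<Rightarrow> (real^'n \<Rightarrow> 'n) \<Rightarrow> bool" where
  "sperner_labeling T lab \<longleftrightarrow> (\<forall>v\<in>tri_vertices T. std_vertex (lab v) \<in> min_face v)"

end

(* Each Sperner labeling \<lambda>_i is turned into a continuous self-map f_i of the simplex that
   preserves every face and whose value at x is supported on the labels \<lambda>_i uses on the simplex
   carrying x (a partition of unity subordinate to the open vertex stars, grouped by label).
   A convex combination \<Sum> c_i f_i still preserves faces, so by Brouwer it hits every interior
   point b.  Comparing supports at a preimage x yields c_i \<le> \<Sum>{b_j | j \<in> \<lambda>_i(\<sigma>)} and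
   b_j \<le> \<Sum>{c_i | j \<in> \<lambda>_i(\<sigma>)} for the simplex \<sigma> carrying x.  With b uniform and
   c_i = (k_i - 1 + 1/m)/n this gives (1); with c uniform and b_j = (l_j - 1 + 1/n)/m it gives (2). *)

theory Submission
  imports Defs
begin

lemma std_simplex_eq:
  "std_simplex = {x::real^'n::finite. (\<forall>j. 0 \<le> x$j) \<and> (\<Sum>j\<in>UNIV. x$j) = 1}"
proof
  have "convex {x::real^'n. (\<forall>j. 0 \<le> x$j) \<and> (\<Sum>j\<in>UNIV. x$j) = 1}"
    unfolding convex_def by (auto simp: sum.distrib sum_distrib_left[symmetric])
  then show "std_simplex \<subseteq> {x::real^'n. (\<forall>j. 0 \<le> x$j) \<and> (\<Sum>j\<in>UNIV. x$j) = 1}"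
    unfolding std_simplex_def
    by (intro hull_minimal) (auto simp: std_vertex_def axis_def if_distrib cong: if_cong)
next
  show "{x::real^'n. (\<forall>j. 0 \<le> x$j) \<and> (\<Sum>j\<in>UNIV. x$j) = 1} \<subseteq> std_simplex"
  proof
    fix x :: "real^'n"
    assume x: "x \<in> {x. (\<forall>j. 0 \<le> x$j) \<and> (\<Sum>j\<in>UNIV. x$j) = 1}"
    have "(\<Sum>j\<in>UNIV. x$j *\<^sub>R std_vertex j) \<in> std_simplex"
      unfolding std_simplex_def by (rule convex_sum) (use x in \<open>auto intro: hull_inc\<close>)
    moreover have "(\<Sum>j\<in>UNIV. x$j *\<^sub>R std_vertex j) = x"
      using basis_expansion[of x] by (simp add: std_vertex_def scalar_mult_eq_scaleR)
    ultimately show "x \<in> std_simplex" by simp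
  qed
qed

lemma std_simplex_nonneg: "x \<in> std_simplex \<Longrightarrow> 0 \<le> x$j"
  by (simp add: std_simplex_eq)

lemma std_simplex_sum: "x \<in> std_simplex \<Longrightarrow> (\<Sum>j\<in>UNIV. x$j) = 1"
  by (simp add: std_simplex_eq)

lemma std_simplex_le_1:
  assumes "x \<in> std_simplex" shows "x$j \<le> 1"
proof -
  have "x$j \<le> (\<Sum>k\<in>UNIV. x$k)"
    by (rule member_le_sum) (use assms std_simplex_nonneg in auto)
  then show ?thesis using std_simplex_sum[OF assms] by simp
qed

lemma compact_std_simplex: "compact std_simplex"
  unfolding std_simplex_def by (simp add: finite_imp_compact_convex_hull)

lemma convex_std_simplex: "convex std_simplex"
  unfolding std_simplex_def by simp

lemma std_simplex_nonempty: "std_simplex \<noteq> {}"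
  unfolding std_simplex_def by (auto intro!: hull_inc)

lemma std_simplex_le_imp_eq:
  assumes "x \<in> std_simplex" "y \<in> std_simplex" "\<And>j. x$j \<le> y$j"
  shows "x = y"
proof -
  have "(\<Sum>j\<in>UNIV. y$j - x$j) = 0"
    using assms(1,2) by (simp add: sum_subtractf std_simplex_sum)
  then have "\<forall>j. y$j - x$j = 0"
    using sum_nonneg_eq_0_iff[of UNIV "\<lambda>j. y$j - x$j"] assms(3) by simp
  then show ?thesis by (simp add: vec_eq_iff)
qed

lemma std_simplex_not_less:
  assumes "x \<in> std_simplex" "y \<in> std_simplex"
  shows "\<not> (\<forall>j. x$j < y$j)"
proof
  assume "\<forall>j. x$j < y$j"
  then have "(\<Sum>j\<in>UNIV. x$j) < (\<Sum>j\<in>UNIV. y$j)" by (intro sum_strict_mono) auto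
  then show False using assms by (simp add: std_simplex_sum)
qed

lemma face_preserving_map_hits_interior:
  fixes F :: "real^'n::finite \<Rightarrow> real^'n"
  assumes cont: "continuous_on std_simplex F" and into: "F ` std_simplex \<subseteq> std_simplex"
    and face: "\<And>x j. x \<in> std_simplex \<Longrightarrow> x$j = 0 \<Longrightarrow> F x $ j = 0"
    and b: "b \<in> std_simplex" "\<And>j. 0 < b$j"
  shows "\<exists>x\<in>std_simplex. F x = b"
proof -
  define p where "p x = (\<chi> j. max 0 (b$j - F x $ j))" for x
  define s where "s x = (\<Sum>j\<in>UNIV. p x $ j)" for x
  \<comment> \<open>G pushes x towards the coordinates where F x falls short of b; at a fixed point the
    deficit is either zero or present in every coordinate, and both force F x = b\<close>
  define G where "G x = inverse (1 + s x) *\<^sub>R (x + p x)" for x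
  have p_nonneg: "0 \<le> p x $ j" for x j by (simp add: p_def)
  then have s_nonneg: "0 \<le> s x" for x by (simp add: s_def sum_nonneg)
  have "continuous_on std_simplex G"
    using s_nonneg unfolding G_def s_def p_def
    by (intro continuous_intros cont) (metis add_nonneg_eq_0_iff zero_le_one one_neq_zero)
  moreover have "G ` std_simplex \<subseteq> std_simplex"
  proof clarify
    fix x :: "real^'n" assume x: "x \<in> std_simplex"
    have "(\<Sum>j\<in>UNIV. G x $ j) = (\<Sum>j\<in>UNIV. x$j + p x $ j) / (1 + s x)"
      by (simp add: G_def sum_distrib_left[symmetric] divide_inverse_commute)
    also have "\<dots> = 1"
      using s_nonneg[of x] by (simp add: sum.distrib s_def std_simplex_sum[OF x])
    finally show "G x \<in> std_simplex"
      unfolding std_simplex_eq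
      using s_nonneg[of x] p_nonneg std_simplex_nonneg[OF x] by (simp add: G_def)
  qed
  ultimately obtain x where x: "x \<in> std_simplex" and "G x = x"
    using brouwer[OF compact_std_simplex convex_std_simplex std_simplex_nonempty] by blast
  have deficit: "p x $ j = s x * x$j" for j
  proof -
    have "(x$j + p x $ j) / (1 + s x) = x$j"
      using \<open>G x = x\<close> by (auto simp: G_def vec_eq_iff divide_inverse_commute)
    then show ?thesis using s_nonneg[of x] by (simp add: field_simps)
  qed
  have Fx: "F x \<in> std_simplex" using into x by blast
  show ?thesis
  proof (cases "s x = 0")
    case True
    then have "b$j \<le> F x $ j" for j
      using deficit[of j] by (simp add: p_def)
    then show ?thesis using std_simplex_le_imp_eq[OF b(1) Fx] x by metis
  next
    case False
    have "0 < x$j" for j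
    proof (rule ccontr)
      assume "\<not> 0 < x$j"
      then have "x$j = 0" using std_simplex_nonneg[OF x, of j] by simp
      then show False using deficit[of j] face[OF x] b(2)[of j] by (simp add: p_def)
    qed
    then have p_pos: "0 < p x $ j" for j
      using False s_nonneg[of x] deficit[of j] by simp
    have "F x $ j < b$j" for j
      using p_pos[of j] by (simp add: p_def)
    then show ?thesis using std_simplex_not_less[OF Fx b(1)] by blast
  qed
qed

lemma convex_combination_hits_interior:
  fixes f :: "'i \<Rightarrow> real^'n::finite \<Rightarrow> real^'n"
  assumes "finite I"
    and cont: "\<And>i. i \<in> I \<Longrightarrow> continuous_on std_simplex (f i)"
    and into: "\<And>i. i \<in> I \<Longrightarrow> f i ` std_simplex \<subseteq> std_simplex"
    and face: "\<And>i x j. i \<in> I \<Longrightarrow> x \<in> std_simplex \<Longrightarrow> x$j = 0 \<Longrightarrow> f i x $ j = 0"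
    and c: "\<And>i. i \<in> I \<Longrightarrow> 0 \<le> c i" "(\<Sum>i\<in>I. c i) = 1"
    and b: "b \<in> std_simplex" "\<And>j. 0 < b$j"
  shows "\<exists>x\<in>std_simplex. (\<Sum>i\<in>I. c i *\<^sub>R f i x) = b"
proof (rule face_preserving_map_hits_interior[OF _ _ _ b])
  show "continuous_on std_simplex (\<lambda>x. \<Sum>i\<in>I. c i *\<^sub>R f i x)"
    by (intro continuous_intros cont)
  show "(\<lambda>x. \<Sum>i\<in>I. c i *\<^sub>R f i x) ` std_simplex \<subseteq> std_simplex"
    using into by (auto intro!: convex_sum[OF \<open>finite I\<close> convex_std_simplex] c)
  show "(\<Sum>i\<in>I. c i *\<^sub>R f i x) $ j = 0" if "x \<in> std_simplex" "x$j = 0" for x j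
    using face that by simp
qed

lemma convex_combination_support_bounds:
  fixes y :: "'i \<Rightarrow> real^'n::finite"
  assumes "finite I" and y: "\<And>i. i \<in> I \<Longrightarrow> y i \<in> std_simplex"
    and c: "\<And>i. i \<in> I \<Longrightarrow> 0 \<le> c i"
    and b: "b = (\<Sum>i\<in>I. c i *\<^sub>R y i)"
  shows "\<And>i. i \<in> I \<Longrightarrow> c i \<le> (\<Sum>j | 0 < y i $ j. b$j)"
    and "b$j \<le> (\<Sum>i | i \<in> I \<and> 0 < y i $ j. c i)"
proof -
  have y_nonneg: "i \<in> I \<Longrightarrow> 0 \<le> y i $ j" for i j using y std_simplex_nonneg by blast
  have b_j: "b$j = (\<Sum>i\<in>I. c i * y i $ j)" for j by (simp add: b)
  show "c i \<le> (\<Sum>j | 0 < y i $ j. b$j)" if i: "i \<in> I" for i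
  proof -
    have "c i = (\<Sum>j\<in>UNIV. c i * y i $ j)"
      using std_simplex_sum[OF y[OF i]] by (simp add: sum_distrib_left[symmetric])
    also have "\<dots> = (\<Sum>j | 0 < y i $ j. c i * y i $ j)"
      using y_nonneg[OF i] by (intro sum.mono_neutral_right) (auto simp: less_le)
    also have "\<dots> \<le> (\<Sum>j | 0 < y i $ j. b$j)"
      unfolding b_j using i c y_nonneg
      by (intro sum_mono member_le_sum[OF _ _ \<open>finite I\<close>, of i "\<lambda>i. c i * y i $ _"]) auto
    finally show ?thesis .
  qed
  have "b$j = (\<Sum>i | i \<in> I \<and> 0 < y i $ j. c i * y i $ j)"
    unfolding b_j using y_nonneg \<open>finite I\<close> by (intro sum.mono_neutral_right) (auto simp: less_le)
  also have "\<dots> \<le> (\<Sum>i | i \<in> I \<and> 0 < y i $ j. c i)"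
    using c y std_simplex_le_1 by (intro sum_mono mult_right_le_one_le) auto
  finally show "b$j \<le> (\<Sum>i | i \<in> I \<and> 0 < y i $ j. c i)" .
qed

definition support_face :: "real^'n::finite \<Rightarrow> (real^'n) set" where
  "support_face x = {y\<in>std_simplex. \<forall>j. x$j = 0 \<longrightarrow> y$j = 0}"

lemma support_face_face_of: "support_face (x::real^'n::finite) face_of std_simplex"
proof -
  define a :: "real^'n" where "a = (\<chi> j. if x$j = 0 then -1 else 0)"
  have a_inner: "a \<bullet> y = - (\<Sum>j | x$j = 0. y$j)" for y
  proof -
    have "a \<bullet> y = (\<Sum>j\<in>UNIV. if x$j = 0 then - y$j else 0)"
      unfolding inner_vec_def by (rule sum.cong) (auto simp: a_def)
    then show ?thesis by (simp add: sum.If_cases sum_negf)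
  qed
  have "(\<Sum>j | x$j = 0. y$j) = 0 \<longleftrightarrow> (\<forall>j. x$j = 0 \<longrightarrow> y$j = 0)" if "y \<in> std_simplex" for y
    using sum_nonneg_eq_0_iff[of "{j. x$j = 0}" "\<lambda>j. y$j"] std_simplex_nonneg[OF that] by auto
  then have "support_face x = std_simplex \<inter> {y. a \<bullet> y = 0}"
    by (auto simp: support_face_def a_inner)
  moreover have "std_simplex \<inter> {y. a \<bullet> y = 0} face_of std_simplex"
    by (rule face_of_Int_supporting_hyperplane_le)
       (auto simp: convex_std_simplex a_inner std_simplex_nonneg intro: sum_nonneg)
  ultimately show ?thesis by simp
qed

lemma in_support_face: "x \<in> std_simplex \<Longrightarrow> x \<in> support_face x"
  by (simp add: support_face_def)

lemma simplicial_complex_face_mem: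
  "simplicial_complex T \<Longrightarrow> S \<in> T \<Longrightarrow> F face_of S \<Longrightarrow> F \<in> T"
  unfolding simplicial_complex_def by blast

lemma simplicial_complex_Int_face_of:
  "simplicial_complex T \<Longrightarrow> S \<in> T \<Longrightarrow> S' \<in> T \<Longrightarrow> (S \<inter> S') face_of S"
  unfolding simplicial_complex_def by blast

lemma simplex_in_complex:
  assumes "simplicial_complex T" "\<sigma> \<in> T"
  shows "finite (simplex_vertices \<sigma>)" "compact \<sigma>" "convex \<sigma>"
proof -
  obtain d where "d simplex \<sigma>" using assms unfolding simplicial_complex_def by blast
  then obtain C where C: "finite C" "\<sigma> = convex hull C" unfolding simplex by blast
  have "simplex_vertices \<sigma> \<subseteq> C"
    unfolding simplex_vertices_def C(2) using extreme_point_of_convex_hull by blast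
  then show "finite (simplex_vertices \<sigma>)" using C(1) finite_subset by blast
  show "compact \<sigma>" "convex \<sigma>" using C by (auto simp: finite_imp_compact_convex_hull)
qed

lemma finite_tri_vertices: "simplicial_complex T \<Longrightarrow> finite (tri_vertices T)"
  unfolding tri_vertices_def using simplex_in_complex(1)
  by (metis finite_UN simplicial_complex_def)

lemma sperner_label_coordinate_pos:
  assumes "triangulation_of_std_simplex T" "sperner_labeling T lab" "v \<in> tri_vertices T"
  shows "0 < v $ lab v"
proof -
  have "v \<in> std_simplex"
    using assms(1,3) extreme_point_of_def
    unfolding triangulation_of_std_simplex_def tri_vertices_def simplex_vertices_def by blast
  then have "min_face v \<subseteq> support_face v"
    unfolding min_face_def using support_face_face_of in_support_face by blast
  moreover have "std_vertex (lab v) \<in> min_face v"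
    using assms(2,3) unfolding sperner_labeling_def by blast
  ultimately have "std_vertex (lab v) \<in> support_face v" by blast
  then have "v $ lab v \<noteq> 0"
    unfolding support_face_def std_vertex_def by (auto simp: axis_def)
  with \<open>v \<in> std_simplex\<close> show ?thesis using std_simplex_nonneg less_le by metis
qed

lemma exists_carrier_simplex:
  assumes tri: "triangulation_of_std_simplex T" and x: "x \<in> std_simplex"
  obtains \<sigma> where "\<sigma> \<in> T" "x \<in> \<sigma>" "\<And>\<tau>. \<tau> \<in> T \<Longrightarrow> x \<in> \<tau> \<Longrightarrow> \<sigma> \<subseteq> \<tau>"
    "\<sigma> \<subseteq> support_face x"
proof -
  have T: "simplicial_complex T" and U: "\<Union>T = std_simplex"
    using tri unfolding triangulation_of_std_simplex_def by auto
  have "finite {\<sigma>\<in>T. x \<in> \<sigma>}" "{\<sigma>\<in>T. x \<in> \<sigma>} \<noteq> {}"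
    using T x U unfolding simplicial_complex_def by auto
  then obtain \<sigma> where \<sigma>: "\<sigma> \<in> T" "x \<in> \<sigma>"
    and minimal: "\<And>\<tau>. \<tau> \<in> T \<Longrightarrow> x \<in> \<tau> \<Longrightarrow> \<tau> \<subseteq> \<sigma> \<Longrightarrow> \<tau> = \<sigma>"
    using finite_has_minimal[of "{\<sigma>\<in>T. x \<in> \<sigma>}"] by blast
  have face_through_x: "F = \<sigma>" if "F face_of \<sigma>" "x \<in> F" for F
    using minimal[of F] simplicial_complex_face_mem[OF T \<sigma>(1)] that face_of_imp_subset by blast
  show thesis
  proof
    show "\<sigma> \<subseteq> \<tau>" if "\<tau> \<in> T" "x \<in> \<tau>" for \<tau>
      using face_through_x[of "\<sigma> \<inter> \<tau>"] simplicial_complex_Int_face_of[OF T \<sigma>(1)] \<sigma>(2) that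
      by blast
    have "\<sigma> \<subseteq> std_simplex" using \<sigma>(1) U by blast
    then have "(support_face x \<inter> \<sigma>) face_of \<sigma>"
      using face_of_slice[OF support_face_face_of simplex_in_complex(3)[OF T \<sigma>(1)]]
      by (simp add: Int_absorb1)
    then show "\<sigma> \<subseteq> support_face x"
      using face_through_x in_support_face[OF x] \<sigma>(2) by blast
  qed (use \<sigma> in auto)
qed

lemma vertex_of_carrier:
  assumes T: "simplicial_complex T" and \<sigma>: "\<sigma> \<in> T" "x \<in> \<sigma>"
    and v: "v \<in> tri_vertices T" and all: "\<And>\<tau>. \<tau> \<in> T \<Longrightarrow> x \<in> \<tau> \<Longrightarrow> v \<in> \<tau>"
  shows "v \<in> simplex_vertices \<sigma>"
proof -
  obtain \<tau> where \<tau>: "\<tau> \<in> T" "v extreme_point_of \<tau>"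
    using v unfolding tri_vertices_def simplex_vertices_def by blast
  have faces: "(\<tau> \<inter> \<sigma>) face_of \<tau>" "(\<tau> \<inter> \<sigma>) face_of \<sigma>"
    using simplicial_complex_Int_face_of[OF T] \<tau>(1) \<sigma>(1) by (metis Int_commute)+
  have "v \<in> \<tau> \<inter> \<sigma>" using all \<sigma> \<tau>(2) extreme_point_of_def by blast
  then have "v extreme_point_of (\<tau> \<inter> \<sigma>)"
    using extreme_point_of_face[OF faces(1)] \<tau>(2) by blast
  then show ?thesis
    using extreme_point_of_face[OF faces(2)] unfolding simplex_vertices_def by blast
qed

lemma exists_sperner_vertex_of_carrier:
  assumes tri: "triangulation_of_std_simplex T" and "sperner_labeling T lab"
    and x: "x \<in> std_simplex"
  obtains v where "v \<in> tri_vertices T" "\<And>\<tau>. \<tau> \<in> T \<Longrightarrow> x \<in> \<tau> \<Longrightarrow> v \<in> \<tau>" "0 < x $ lab v"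
proof -
  have T: "simplicial_complex T"
    using tri unfolding triangulation_of_std_simplex_def by auto
  obtain \<sigma> where \<sigma>: "\<sigma> \<in> T" "x \<in> \<sigma>" "\<And>\<tau>. \<tau> \<in> T \<Longrightarrow> x \<in> \<tau> \<Longrightarrow> \<sigma> \<subseteq> \<tau>"
    "\<sigma> \<subseteq> support_face x"
    using exists_carrier_simplex[OF tri x] by blast
  obtain v where v: "v extreme_point_of \<sigma>"
    using extreme_point_exists_convex simplex_in_complex(2,3)[OF T \<sigma>(1)] \<sigma>(2) by blast
  then have "v \<in> \<sigma>" by (simp add: extreme_point_of_def)
  have v_vertex: "v \<in> tri_vertices T"
    using v \<sigma>(1) unfolding tri_vertices_def simplex_vertices_def by blast
  have "x $ lab v \<noteq> 0"
    using sperner_label_coordinate_pos[OF tri assms(2) v_vertex] \<sigma>(4) \<open>v \<in> \<sigma>\<close>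
    unfolding support_face_def by auto
  then have "0 < x $ lab v" using std_simplex_nonneg[OF x] less_le by metis
  then show thesis using that v_vertex \<sigma>(3) \<open>v \<in> \<sigma>\<close> by blast
qed

text \<open>Positive exactly on the open star of v; the case split is needed because infdist x {} = 0.\<close>

definition star_distance :: "(real^'n::finite) set set \<Rightarrow> real^'n \<Rightarrow> real^'n \<Rightarrow> real" where
  "star_distance T v x =
     (if \<Union>{\<sigma>\<in>T. v \<notin> \<sigma>} = {} then 1 else infdist x (\<Union>{\<sigma>\<in>T. v \<notin> \<sigma>}))"

lemma star_distance_nonneg: "0 \<le> star_distance T v x"
  by (simp add: star_distance_def infdist_nonneg)

lemma continuous_on_star_distance: "continuous_on S (star_distance T v)"
proof (cases "\<Union>{\<sigma>\<in>T. v \<notin> \<sigma>} = {}")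
  case True
  show ?thesis unfolding star_distance_def if_P[OF True] by simp
next
  case False
  show ?thesis unfolding star_distance_def if_not_P[OF False]
    by (intro continuous_on_infdist continuous_on_id)
qed

lemma star_distance_pos_iff:
  assumes T: "simplicial_complex T"
  shows "0 < star_distance T v x \<longleftrightarrow> (\<forall>\<tau>\<in>T. x \<in> \<tau> \<longrightarrow> v \<in> \<tau>)"
proof (cases "\<Union>{\<sigma>\<in>T. v \<notin> \<sigma>} = {}")
  case True
  then show ?thesis unfolding star_distance_def if_P[OF True] by auto
next
  case False
  have "finite {\<sigma>\<in>T. v \<notin> \<sigma>}" using T by (simp add: simplicial_complex_def)
  moreover have "\<forall>\<sigma>\<in>{\<sigma>\<in>T. v \<notin> \<sigma>}. closed \<sigma>"
    using simplex_in_complex(2)[OF T] compact_imp_closed by blast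
  ultimately have "closed (\<Union>{\<sigma>\<in>T. v \<notin> \<sigma>})" by (rule closed_Union)
  then have "x \<in> \<Union>{\<sigma>\<in>T. v \<notin> \<sigma>} \<longleftrightarrow> star_distance T v x = 0"
    using in_closed_iff_infdist_zero[OF _ False] unfolding star_distance_def if_not_P[OF False]
    by blast
  moreover have "0 < star_distance T v x \<longleftrightarrow> star_distance T v x \<noteq> 0"
    using star_distance_nonneg[of T v x] by linarith
  ultimately show ?thesis by blast
qed

text \<open>The factor x$j makes the normalised map preserve every face of the simplex.\<close>

definition label_weight :: "(real^'n::finite) set set \<Rightarrow> (real^'n \<Rightarrow> 'n) \<Rightarrow> real^'n \<Rightarrow> real^'n" where
  "label_weight T lab x =
     (\<chi> j. x$j * (\<Sum>v | v \<in> tri_vertices T \<and> lab v = j. star_distance T v x))"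

definition label_map :: "(real^'n::finite) set set \<Rightarrow> (real^'n \<Rightarrow> 'n) \<Rightarrow> real^'n \<Rightarrow> real^'n" where
  "label_map T lab x = inverse (\<Sum>j\<in>UNIV. label_weight T lab x $ j) *\<^sub>R label_weight T lab x"

lemma label_weight_nonneg: "x \<in> std_simplex \<Longrightarrow> 0 \<le> label_weight T lab x $ j"
  by (simp add: label_weight_def std_simplex_nonneg star_distance_nonneg sum_nonneg)

lemma continuous_on_label_weight: "continuous_on S (label_weight T lab)"
  unfolding label_weight_def vec_lambda_eta
  by (intro continuous_on_vec_lambda continuous_intros continuous_on_star_distance)

lemma label_weight_sum_pos:
  assumes tri: "triangulation_of_std_simplex T" and sp: "sperner_labeling T lab"
    and x: "x \<in> std_simplex"
  shows "0 < (\<Sum>j\<in>UNIV. label_weight T lab x $ j)"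
proof -
  have T: "simplicial_complex T" using tri by (simp add: triangulation_of_std_simplex_def)
  obtain v where v: "v \<in> tri_vertices T" "\<And>\<tau>. \<tau> \<in> T \<Longrightarrow> x \<in> \<tau> \<Longrightarrow> v \<in> \<tau>" "0 < x $ lab v"
    using exists_sperner_vertex_of_carrier[OF tri sp x] by blast
  have "star_distance T v x \<le> (\<Sum>u | u \<in> tri_vertices T \<and> lab u = lab v. star_distance T u x)"
    using v(1) finite_tri_vertices[OF T]
    by (intro member_le_sum) (auto simp: star_distance_nonneg)
  moreover have "0 < star_distance T v x" using v(2) star_distance_pos_iff[OF T] by blast
  ultimately have "0 < label_weight T lab x $ lab v"
    using v(3) by (simp add: label_weight_def)
  also have "\<dots> \<le> (\<Sum>j\<in>UNIV. label_weight T lab x $ j)"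
    by (intro member_le_sum) (auto simp: label_weight_nonneg x)
  finally show ?thesis .
qed

lemma label_weight_pos_imp_label:
  assumes T: "simplicial_complex T" and \<sigma>: "\<sigma> \<in> T" "x \<in> \<sigma>"
    and pos: "0 < label_weight T lab x $ j"
  shows "j \<in> lab ` simplex_vertices \<sigma>"
proof -
  let ?S = "(\<Sum>v | v \<in> tri_vertices T \<and> lab v = j. star_distance T v x)"
  have "0 \<le> ?S" by (intro sum_nonneg star_distance_nonneg)
  then have "0 < ?S" using pos by (auto simp: label_weight_def zero_less_mult_iff)
  then obtain v where v: "v \<in> tri_vertices T" "lab v = j" "0 < star_distance T v x"
    using sum_nonpos[of "{v. v \<in> tri_vertices T \<and> lab v = j}" "\<lambda>v. star_distance T v x"]
    by (force simp: not_less[symmetric])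
  then have "v \<in> simplex_vertices \<sigma>"
    using vertex_of_carrier[OF T \<sigma>] star_distance_pos_iff[OF T] by blast
  then show ?thesis using v(2) by blast
qed

lemma label_map_eq_0: "x$j = 0 \<Longrightarrow> label_map T lab x $ j = 0"
  by (simp add: label_map_def label_weight_def)

context
  fixes T :: "(real^'n::finite) set set" and lab :: "real^'n \<Rightarrow> 'n"
  assumes tri: "triangulation_of_std_simplex T" and sp: "sperner_labeling T lab"
begin

lemma label_map_mem:
  assumes "x \<in> std_simplex" shows "label_map T lab x \<in> std_simplex"
  using label_weight_sum_pos[OF tri sp assms] label_weight_nonneg[OF assms]
  by (simp add: std_simplex_eq label_map_def sum_distrib_left[symmetric])

lemma continuous_on_label_map: "continuous_on std_simplex (label_map T lab)"
  unfolding label_map_def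
  using label_weight_sum_pos[OF tri sp]
  by (intro continuous_intros continuous_on_label_weight) (metis less_irrefl)

lemma label_map_pos_imp_label:
  assumes "\<sigma> \<in> T" "x \<in> \<sigma>" "0 < label_map T lab x $ j"
  shows "j \<in> lab ` simplex_vertices \<sigma>"
proof (rule label_weight_pos_imp_label[OF _ assms(1,2)])
  show "simplicial_complex T" using tri by (simp add: triangulation_of_std_simplex_def)
  have "x \<in> std_simplex" using tri assms(1,2) by (auto simp: triangulation_of_std_simplex_def)
  then show "0 < label_weight T lab x $ j"
    using assms(3) label_weight_sum_pos[OF tri sp \<open>x \<in> std_simplex\<close>]
    by (simp add: label_map_def zero_less_mult_iff)
qed

end

lemma sperner_family_balanced_simplex:
  fixes T :: "(real^'n::finite) set set" and lam :: "nat \<Rightarrow> real^'n \<Rightarrow> 'n"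
  assumes tri: "triangulation_of_std_simplex T"
    and sp: "\<And>i. i < m \<Longrightarrow> sperner_labeling T (lam i)"
    and c: "\<And>i. i < m \<Longrightarrow> 0 \<le> c i" "(\<Sum>i<m. c i) = 1"
    and b: "b \<in> std_simplex" "\<And>j. 0 < b$j"
  shows "\<exists>\<sigma>\<in>T. (\<forall>i<m. c i \<le> (\<Sum>j\<in>lam i ` simplex_vertices \<sigma>. b$j))
              \<and> (\<forall>j. b$j \<le> (\<Sum>i | i < m \<and> j \<in> lam i ` simplex_vertices \<sigma>. c i))"
proof -
  let ?f = "\<lambda>i. label_map T (lam i)"
  have maps_into: "?f i x \<in> std_simplex" if "i \<in> {..<m}" "x \<in> std_simplex" for i x
    using label_map_mem[OF tri sp that(2)] that(1) by simp
  have c': "0 \<le> c i" if "i \<in> {..<m}" for i using c(1) that by simp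
  have "\<exists>x\<in>std_simplex. (\<Sum>i\<in>{..<m}. c i *\<^sub>R ?f i x) = b"
  proof (rule convex_combination_hits_interior[OF finite_lessThan _ _ _ c' c(2) b])
    show "continuous_on std_simplex (?f i)" if "i \<in> {..<m}" for i
      using continuous_on_label_map[OF tri sp] that by simp
    show "?f i ` std_simplex \<subseteq> std_simplex" if "i \<in> {..<m}" for i
      using maps_into that by auto
    show "?f i x $ j = 0" if "x$j = 0" for i x j
      using that by (rule label_map_eq_0)
  qed
  then obtain x where x: "x \<in> std_simplex" and b_eq: "b = (\<Sum>i<m. c i *\<^sub>R ?f i x)"
    by metis
  obtain \<sigma> where \<sigma>: "\<sigma> \<in> T" "x \<in> \<sigma>"
    using tri x by (auto simp: triangulation_of_std_simplex_def)
  have labels: "j \<in> lam i ` simplex_vertices \<sigma>" if "i < m" "0 < ?f i x $ j" for i j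
    using label_map_pos_imp_label[OF tri sp[OF that(1)] \<sigma> that(2)] .
  have finite_labels: "finite (lam i ` simplex_vertices \<sigma>)" for i
    using tri \<sigma>(1) simplex_in_complex(1) by (auto simp: triangulation_of_std_simplex_def)
  note bounds = convex_combination_support_bounds[OF finite_lessThan maps_into[OF _ x] c' b_eq]
  show ?thesis
  proof (intro bexI[OF _ \<sigma>(1)] conjI allI impI)
    fix i assume "i < m"
    then have "c i \<le> (\<Sum>j | 0 < ?f i x $ j. b$j)" using bounds(1) by simp
    also have "\<dots> \<le> (\<Sum>j\<in>lam i ` simplex_vertices \<sigma>. b$j)"
      using labels[OF \<open>i < m\<close>] finite_labels b(2) by (intro sum_mono2) (auto simp: less_imp_le)
    finally show "c i \<le> (\<Sum>j\<in>lam i ` simplex_vertices \<sigma>. b$j)" .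
  next
    fix j
    have "b$j \<le> (\<Sum>i | i < m \<and> 0 < ?f i x $ j. c i)" using bounds(2) by simp
    also have "\<dots> \<le> (\<Sum>i | i < m \<and> j \<in> lam i ` simplex_vertices \<sigma>. c i)"
      using labels c(1) by (intro sum_mono2) auto
    finally show "b$j \<le> (\<Sum>i | i < m \<and> j \<in> lam i ` simplex_vertices \<sigma>. c i)" .
  qed
qed

text \<open>The weights (k_i - 1 + 1/p)/q over p indices sum to 1 exactly when \<Sum>k_i = p + q - 1,
  and the slack 1/p turns a bound by a/q back into the integer bound k_i \<le> a.\<close>

definition integer_split_weight :: "nat \<Rightarrow> nat \<Rightarrow> nat \<Rightarrow> real" where
  "integer_split_weight p q k = (real k - 1 + 1 / real p) / real q"

lemma integer_split_weight_pos:
  assumes "0 < k" "0 < p" "0 < q" shows "0 < integer_split_weight p q k"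
proof -
  have "1 \<le> real k" using assms(1) by simp
  then show ?thesis using assms(2,3) by (simp add: integer_split_weight_def add_nonneg_pos)
qed

lemma integer_split_weight_sum:
  assumes "finite I" "card I = p" "0 < p" "0 < q" "(\<Sum>i\<in>I. k i) = p + q - 1"
  shows "(\<Sum>i\<in>I. integer_split_weight p q (k i)) = 1"
proof -
  have "(\<Sum>i\<in>I. real (k i)) = real p + real q - 1"
    using assms(3,5) by (simp flip: of_nat_sum)
  then show ?thesis
    using assms(1-4)
    by (simp add: integer_split_weight_def sum_divide_distrib[symmetric] sum.distrib sum_subtractf)
qed

lemma integer_split_weight_le_imp_le:
  assumes "0 < p" "0 < q" "integer_split_weight p q k \<le> real a / real q"
  shows "k \<le> a"
proof -
  have "real k - 1 + 1 / real p \<le> real a"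
    using assms by (simp add: integer_split_weight_def divide_le_cancel)
  moreover have "0 < 1 / real p" using assms(1) by simp
  ultimately show ?thesis by linarith
qed

lemma sperner_family_distinct_labels:
  fixes T :: "(real^'n::finite) set set" and lam :: "nat \<Rightarrow> real^'n \<Rightarrow> 'n"
  assumes tri: "triangulation_of_std_simplex T"
    and sp: "\<And>i. i < m \<Longrightarrow> sperner_labeling T (lam i)"
    and k: "\<And>i. i < m \<Longrightarrow> 0 < k i" "(\<Sum>i<m. k i) = m + CARD('n) - 1"
  shows "\<exists>\<sigma>\<in>T. \<forall>i<m. k i \<le> card (lam i ` simplex_vertices \<sigma>)"
proof (cases "m = 0")
  case True
  then show ?thesis
    using tri std_simplex_nonempty by (auto simp: triangulation_of_std_simplex_def)
next
  case False
  define c where "c i = integer_split_weight m CARD('n) (k i)" for i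
  define b :: "real^'n" where "b = (\<chi> j. 1 / real CARD('n))"
  have "(\<Sum>i<m. c i) = 1"
    unfolding c_def using False k(2) by (intro integer_split_weight_sum) auto
  moreover have "b \<in> std_simplex" "0 < b$j" for j
    by (simp_all add: b_def std_simplex_eq)
  moreover have "0 \<le> c i" if "i < m" for i
    using integer_split_weight_pos[OF k(1)[OF that]] False by (simp add: c_def less_imp_le)
  ultimately have "\<exists>\<sigma>\<in>T. (\<forall>i<m. c i \<le> (\<Sum>j\<in>lam i ` simplex_vertices \<sigma>. b$j))
              \<and> (\<forall>j. b$j \<le> (\<Sum>i | i < m \<and> j \<in> lam i ` simplex_vertices \<sigma>. c i))"
    using sp by (intro sperner_family_balanced_simplex[OF tri])
  then obtain \<sigma> where "\<sigma> \<in> T"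
    and bound: "\<And>i. i < m \<Longrightarrow> c i \<le> (\<Sum>j\<in>lam i ` simplex_vertices \<sigma>. b$j)"
    by blast
  have "k i \<le> card (lam i ` simplex_vertices \<sigma>)" if "i < m" for i
    using bound[OF that] False
    by (intro integer_split_weight_le_imp_le[of m "CARD('n)"]) (simp_all add: c_def b_def)
  then show ?thesis using \<open>\<sigma> \<in> T\<close> by blast
qed

lemma sperner_family_label_multiplicities:
  fixes T :: "(real^'n::finite) set set" and lam :: "nat \<Rightarrow> real^'n \<Rightarrow> 'n"
  assumes tri: "triangulation_of_std_simplex T"
    and sp: "\<And>i. i < m \<Longrightarrow> sperner_labeling T (lam i)"
    and l: "\<And>j. 0 < l j" "(\<Sum>j\<in>UNIV. l j) = m + CARD('n) - 1"
  shows "\<exists>\<tau>\<in>T. \<forall>j. l j \<le> card {i. i < m \<and> j \<in> lam i ` simplex_vertices \<tau>}"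
proof -
  have "CARD('n) \<le> (\<Sum>j\<in>UNIV. l j)"
    using sum_mono[of UNIV "\<lambda>_. 1::nat" l] l(1) by (simp add: Suc_le_eq)
  then have "0 < m" using l(2) zero_less_card_finite[where 'a='n] by linarith
  define c where "c i = 1 / real m" for i :: nat
  define b :: "real^'n" where "b = (\<chi> j. integer_split_weight CARD('n) m (l j))"
  have b_pos: "0 < b$j" for j
    using integer_split_weight_pos[OF l(1)] \<open>0 < m\<close> by (simp add: b_def)
  have "(\<Sum>j\<in>UNIV. b$j) = 1"
    unfolding b_def using \<open>0 < m\<close> l(2) by (simp add: integer_split_weight_sum)
  then have "b \<in> std_simplex" using b_pos by (simp add: std_simplex_eq less_imp_le)
  moreover have "(\<Sum>i<m. c i) = 1" "0 \<le> c i" for i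
    using \<open>0 < m\<close> by (simp_all add: c_def)
  ultimately have "\<exists>\<tau>\<in>T. (\<forall>i<m. c i \<le> (\<Sum>j\<in>lam i ` simplex_vertices \<tau>. b$j))
              \<and> (\<forall>j. b$j \<le> (\<Sum>i | i < m \<and> j \<in> lam i ` simplex_vertices \<tau>. c i))"
    using sp b_pos by (intro sperner_family_balanced_simplex[OF tri])
  then obtain \<tau> where "\<tau> \<in> T"
    and bound: "\<And>j. b$j \<le> (\<Sum>i | i < m \<and> j \<in> lam i ` simplex_vertices \<tau>. c i)"
    by blast
  have "l j \<le> card {i. i < m \<and> j \<in> lam i ` simplex_vertices \<tau>}" for j
    using bound[of j] \<open>0 < m\<close>
    by (intro integer_split_weight_le_imp_le[of "CARD('n)" m]) (simp_all add: c_def b_def)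
  then show ?thesis using \<open>\<tau> \<in> T\<close> by blast
qed

theorem theorem2p1:
  fixes T :: "(real^'n::finite) set set"
    and lam :: "nat \<Rightarrow> real^'n \<Rightarrow> 'n"
    and m :: nat
  assumes "triangulation_of_std_simplex T"
    and "\<And>i. i < m \<Longrightarrow> sperner_labeling T (lam i)"
  shows "(\<forall>k::nat \<Rightarrow> nat. (\<forall>i<m. 0 < k i) \<and> (\<Sum>i<m. k i) = m + CARD('n) - 1 \<longrightarrow>
            (\<exists>\<sigma>\<in>T. \<forall>i<m. k i \<le> card (lam i ` simplex_vertices \<sigma>)))
       \<and> (\<forall>l::'n \<Rightarrow> nat. (\<forall>j. 0 < l j) \<and> (\<Sum>j\<in>UNIV. l j) = m + CARD('n) - 1 \<longrightarrow>
            (\<exists>\<tau>\<in>T. \<forall>j. l j \<le> card {i. i < m \<and> j \<in> lam i ` simplex_vertices \<tau>}))"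
proof (intro conjI allI impI)
  show "\<exists>\<sigma>\<in>T. \<forall>i<m. k i \<le> card (lam i ` simplex_vertices \<sigma>)"
    if "(\<forall>i<m. 0 < k i) \<and> (\<Sum>i<m. k i) = m + CARD('n) - 1" for k
    using that by (intro sperner_family_distinct_labels[OF assms]) auto
  show "\<exists>\<tau>\<in>T. \<forall>j. l j \<le> card {i. i < m \<and> j \<in> lam i ` simplex_vertices \<tau>}"
    if "(\<forall>j. 0 < l j) \<and> (\<Sum>j\<in>UNIV. l j) = m + CARD('n) - 1" for l
    using that by (intro sperner_family_label_multiplicities[OF assms]) auto
qed

end
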